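(* Let $A$ be a closed solid convex set in $\mathbb{R}^n$ with $\mathcal{C}^2$ smooth boundary around $\bar x\in\operatorname{bd}A$. Then there exists $\delta>0$ such that for all $x$ with $\|x-\bar x\|\le\delta$ and $x\notin A$, $$\Pi_A^\alpha x\in\operatorname{int}A\quad\text{for all }\alpha\in(1,2].$$
   Context: Solid means $\operatorname{int}A\neq\emptyset$. $\Pi_A$ is the projection onto $A$ and $\Pi_A^\alpha:=(1-\alpha)I+\alpha\Pi_A$. $A$ has $\mathcal{C}^2$ smooth boundary around $\bar x$ if $\operatorname{bd}A$ is a $\mathcal{C}^2$ manifold around $\bar x$, i.e. there is an open $U\ni\bar x$ with $\operatorname{bd}A\cap U=\{y:F(y)=0\}$ for a $\mathcal{C}^2$ map $F$ with surjective derivative throughout $U$. *)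

theory Defs
  imports "HOL-Analysis.Analysis"
begin

text \<open>Projection onto A (for closed convex nonempty A in a Euclidean space the
  library's closest_point is the metric projection) and its relaxation.\<close>
definition proj :: "'a::euclidean_space set \<Rightarrow> 'a \<Rightarrow> 'a" where
  "proj A x = closest_point A x"

definition relaxed_proj :: "real \<Rightarrow> 'a::euclidean_space set \<Rightarrow> 'a \<Rightarrow> 'a" where
  "relaxed_proj \<alpha> A x = (1 - \<alpha>) *\<^sub>R x + \<alpha> *\<^sub>R proj A x"

definition C2_on :: "'a::euclidean_space set \<Rightarrow> ('a \<Rightarrow> 'b::euclidean_space) \<Rightarrow> bool" where
  "C2_on U F \<longleftrightarrow> (\<exists>F' :: 'a \<Rightarrow> ('a \<Rightarrow>\<^sub>L 'b). \<exists>F'' :: 'a \<Rightarrow> ('a \<Rightarrow>\<^sub>L ('a \<Rightarrow>\<^sub>L 'b)).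
      (\<forall>y\<in>U. (F has_derivative blinfun_apply (F' y)) (at y)) \<and>
      (\<forall>y\<in>U. (F' has_derivative blinfun_apply (F'' y)) (at y)) \<and>
      continuous_on U F'')"

text \<open>The codomain R^m is the type variable 'b.\<close>
definition C2_smooth_boundary_at :: "'a::euclidean_space set \<Rightarrow> 'a \<Rightarrow> ('b::euclidean_space) itself \<Rightarrow> bool" where
  "C2_smooth_boundary_at A xbar _ \<longleftrightarrow> (\<exists>U. \<exists>F :: 'a \<Rightarrow> 'b. open U \<and> xbar \<in> U \<and> C2_on U F \<and>
      (\<forall>y\<in>U. F differentiable (at y) \<and> surj (frechet_derivative F (at y))) \<and>
      frontier A \<inter> U = {y\<in>U. F y = 0})"

end

theory Submission
  imports Defs
begin

(* Pick a component f of the chart F with f' xbar v = 1; near xbar, f increases in the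
   direction v and vanishes on the frontier. Any point of a small ball where f > 0 can be
   joined to a fixed point by a path in {f > 0}, which misses the frontier, so the whole
   positive side (or, replacing f by -f, the negative side) of the ball lies in int A.
   For x outside A near xbar, p = proj A x lies on the frontier, so f p = 0, and every
   direction in which f increases at p points into A; hence the derivative of f at p is a
   positive multiple of the inward normal n = (p - x)/|p - x|. So f is positive along
   p + t n for small t > 0, and the relaxed projection p + (alpha - 1)|x - p| n is such
   a point. *)

lemma has_real_derivative_along_line:
  fixes f :: "'a::real_normed_vector \<Rightarrow> real"
  assumes "(f has_derivative f') (at (y + t *\<^sub>R v))"
  shows "((\<lambda>s. f (y + s *\<^sub>R v)) has_real_derivative f' v) (at t)"
proof -
  have "((\<lambda>s. y + s *\<^sub>R v) has_derivative (\<lambda>h. h *\<^sub>R v)) (at t)"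
    by (auto intro!: derivative_eq_intros)
  from has_derivative_compose[OF this assms]
  have "((\<lambda>s. f (y + s *\<^sub>R v)) has_derivative (\<lambda>h. f' (h *\<^sub>R v))) (at t)" .
  then show ?thesis
    by (rule has_derivative_imp_has_field_derivative)
       (simp add: linear_scale[OF has_derivative_linear[OF assms]])
qed

lemma directional_derivative_lower_bound:
  fixes f :: "'a::real_normed_vector \<Rightarrow> real"
  assumes "convex S"
    and deriv: "\<And>z. z \<in> S \<Longrightarrow> (f has_derivative f' z) (at z)"
    and slope: "\<And>z. z \<in> S \<Longrightarrow> c \<le> f' z v"
    and "y \<in> S" "y + s *\<^sub>R v \<in> S" "0 \<le> s"
  shows "f y + c * s \<le> f (y + s *\<^sub>R v)"
proof -
  let ?g = "\<lambda>t. f (y + t *\<^sub>R v) - c * t"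
  have "?g 0 \<le> ?g s"
  proof (rule DERIV_nonneg_imp_nondecreasing[OF \<open>0 \<le> s\<close>])
    fix t assume "0 \<le> t" "t \<le> s"
    have yt: "y + t *\<^sub>R v \<in> S"
    proof (cases "s = 0")
      case False
      then have "y + t *\<^sub>R v = (1 - t / s) *\<^sub>R y + (t / s) *\<^sub>R (y + s *\<^sub>R v)"
        by (simp add: algebra_simps)
      then show ?thesis
        using convexD_alt[OF assms(1,4,5)] \<open>0 \<le> t\<close> \<open>t \<le> s\<close> False by simp
    qed (use \<open>0 \<le> t\<close> \<open>t \<le> s\<close> \<open>y \<in> S\<close> in simp)
    have "(?g has_real_derivative f' (y + t *\<^sub>R v) v - c) (at t)"
      using has_real_derivative_along_line[OF deriv[OF yt]]
      by (auto intro!: derivative_eq_intros)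
    then show "\<exists>l. (?g has_real_derivative l) (at t) \<and> 0 \<le> l"
      using slope[OF yt] by force
  qed
  then show ?thesis by simp
qed

lemma connected_disjoint_frontier_interior_iff:
  assumes "connected S" "S \<inter> frontier A = {}" "a \<in> S" "b \<in> S"
  shows "a \<in> interior A \<longleftrightarrow> b \<in> interior A"
  using connected_Int_frontier[OF assms(1), of "interior A"] frontier_interior_subset[of A] assms
  by blast

lemma closest_point_in_frontier:
  fixes S :: "'a::euclidean_space set"
  assumes "closed S" "S \<noteq> {}" "x \<notin> S"
  shows "closest_point S x \<in> frontier S"
proof -
  let ?p = "closest_point S x"
  have "?p \<notin> interior S"
  proof
    assume "?p \<in> interior S"
    then obtain e where "e > 0" "ball ?p e \<subseteq> S"
      unfolding mem_interior by blast
    have "?p \<noteq> x" using closest_point_in_set[OF assms(1,2), of x] assms(3) by metis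
    define t where "t = min (1/2) (e / (2 * dist ?p x))"
    have t: "0 < t" "t < 1" "t * dist ?p x < e"
      using \<open>e > 0\<close> \<open>?p \<noteq> x\<close> by (auto simp: t_def min_def field_simps)
    define z where "z = ?p + t *\<^sub>R (x - ?p)"
    have "dist ?p z = t * dist ?p x"
      using t by (simp add: z_def dist_norm norm_minus_commute)
    then have "z \<in> S"
      using t \<open>ball ?p e \<subseteq> S\<close> by auto
    have "x - z = (1 - t) *\<^sub>R (x - ?p)"
      by (simp add: z_def algebra_simps)
    then have "dist x z = (1 - t) * dist x ?p"
      using t by (simp add: dist_norm)
    also have "\<dots> < dist x ?p"
      using t \<open>?p \<noteq> x\<close> by simp
    finally show False
      using closest_point_le[OF assms(1) \<open>z \<in> S\<close>, of x] by simp
  qed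
  then show ?thesis
    using closest_point_in_set[OF assms(1,2)] assms(1) by (simp add: frontier_def)
qed

lemma linear_functional_nonneg_on_halfspace:
  fixes l :: "'a::real_inner \<Rightarrow> real"
  assumes l: "linear l" and n: "norm n = 1"
    and pos: "\<And>w. 0 < l w \<Longrightarrow> 0 \<le> inner w n"
  shows "0 \<le> l n" and "l w = l n * inner w n"
proof -
  have nn: "inner n n = 1"
    using n by (simp add: dot_square_norm)
  show ln: "0 \<le> l n"
    using pos[of "- n"] nn linear_neg[OF l, of n] by force
  have no_pos_kernel: False if "inner u n = 0" "0 < l u" for u
  proof -
    define \<epsilon> where "\<epsilon> = l u / (l n + 1)"
    have "\<epsilon> > 0"
      using that ln by (simp add: \<epsilon>_def)
    have "l (u - \<epsilon> *\<^sub>R n) = l u / (l n + 1)"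
      using ln by (simp add: linear_diff[OF l] linear_scale[OF l] \<epsilon>_def field_simps)
    then have "0 \<le> inner (u - \<epsilon> *\<^sub>R n) n"
      using that ln by (intro pos) simp
    then show False
      using that nn \<open>\<epsilon> > 0\<close> by (simp add: inner_diff_left)
  qed
  have kernel: "l u = 0" if "inner u n = 0" for u
    using no_pos_kernel[of u] no_pos_kernel[of "- u"] that linear_neg[OF l, of u]
    by (cases "l u" "0 :: real" rule: linorder_cases) auto
  have "inner (w - inner w n *\<^sub>R n) n = 0"
    using nn by (simp add: inner_diff_left)
  from kernel[OF this] show "l w = l n * inner w n"
    by (simp add: linear_diff[OF l] linear_scale[OF l])
qed

(* The bound on \<eta> keeps
   f' z v \<ge> 7/8 on the ball and leaves room for a 2\<eta> error in slope_along_normal. *)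
locale boundary_defining_function =
  fixes A :: "'a::euclidean_space set" and f :: "'a \<Rightarrow> real" and f' :: "'a \<Rightarrow> 'a \<Rightarrow> real"
    and xb :: 'a and r \<eta> :: real and v :: 'a
  assumes closed: "closed A" and convex: "convex A" and xb_frontier: "xb \<in> frontier A"
    and r_pos: "0 < r"
    and deriv: "\<And>z. z \<in> ball xb r \<Longrightarrow> (f has_derivative f' z) (at z)"
    and deriv_near: "\<And>z w. z \<in> ball xb r \<Longrightarrow> \<bar>f' z w - f' xb w\<bar> \<le> \<eta> * norm w"
    and deriv_v: "f' xb v = 1" and eta_v: "\<eta> * norm v \<le> 1/8"
    and frontier_zero: "\<And>z. z \<in> ball xb r \<Longrightarrow> z \<in> frontier A \<Longrightarrow> f z = 0"
begin

lemma linear_deriv: "z \<in> ball xb r \<Longrightarrow> linear (f' z)"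
  using deriv has_derivative_linear by blast

lemma xb_in_ball: "xb \<in> ball xb r"
  using r_pos by simp

lemma f_xb: "f xb = 0"
  using frontier_zero[OF xb_in_ball xb_frontier] .

lemma v_nonzero: "v \<noteq> 0"
  using deriv_v linear_0[OF linear_deriv[OF xb_in_ball]] by auto

lemma slope_v: "z \<in> ball xb r \<Longrightarrow> 7/8 \<le> f' z v"
  using deriv_near[of z v] deriv_v eta_v by linarith

lemma uminus: "boundary_defining_function A (\<lambda>y. - f y) (\<lambda>z w. - f' z w) xb r \<eta> (- v)"
proof
  show "((\<lambda>y. - f y) has_derivative (\<lambda>w. - f' z w)) (at z)" if "z \<in> ball xb r" for z
    using deriv[OF that] by (rule has_derivative_minus)
  show "- f' xb (- v) = 1"
    using deriv_v linear_neg[OF linear_deriv[OF xb_in_ball]] by simp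
qed (use closed convex xb_frontier r_pos deriv_near eta_v frontier_zero in \<open>auto simp: abs_minus_commute\<close>)

lemma positive_side_interior_iff:
  assumes s: "0 \<le> s" "norm (s *\<^sub>R v) \<le> r/2" and \<rho>: "\<rho> \<le> r/2"
    and small: "\<And>z. z \<in> ball xb \<rho> \<Longrightarrow> \<bar>f z\<bar> < 7/8 * s"
    and y: "y \<in> ball xb \<rho>" and fy: "0 < f y"
  shows "y \<in> interior A \<longleftrightarrow> xb + s *\<^sub>R v \<in> interior A"
proof -
  \<comment> \<open>The path from y to y + s v and on, parallel to [y, xb], to xb + s v stays in
    {f > 0}: f grows by at least 7/8 per unit along v, while |f| < 7/8 s near xb.\<close>
  have shift: "w + t *\<^sub>R v \<in> ball xb r \<and> f w + 7/8 * t \<le> f (w + t *\<^sub>R v)"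
    if w: "w \<in> ball xb \<rho>" and t: "0 \<le> t" "t \<le> s" for w t
  proof
    have "norm (t *\<^sub>R v) \<le> norm (s *\<^sub>R v)"
      using t by (simp add: mult_right_mono)
    then have "dist xb w + norm (t *\<^sub>R v) < r"
      using w s \<rho> r_pos by simp
    then show "w + t *\<^sub>R v \<in> ball xb r"
      using dist_triangle[of xb "w + t *\<^sub>R v" w] by (simp add: dist_norm)
    then show "f w + 7/8 * t \<le> f (w + t *\<^sub>R v)"
      using w \<rho> r_pos t
      by (intro directional_derivative_lower_bound[OF convex_ball deriv slope_v]) auto
  qed
  define S1 where "S1 = (\<lambda>t. y + t *\<^sub>R v) ` {0..s}"
  define S2 where "S2 = (\<lambda>w. w + s *\<^sub>R v) ` closed_segment y xb"
  have "0 < \<rho>"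
    using y le_less_trans[OF zero_le_dist] by auto
  then have segment: "closed_segment y xb \<subseteq> ball xb \<rho>"
    using y by (intro closed_segment_subset) auto
  have "z \<notin> frontier A" if "z \<in> S1 \<union> S2" for z
  proof -
    have "z \<in> ball xb r \<and> 0 < f z"
      using that
    proof
      assume "z \<in> S1"
      then obtain t where "0 \<le> t" "t \<le> s" "z = y + t *\<^sub>R v"
        unfolding S1_def by auto
      then show ?thesis
        using shift[OF y] fy by force
    next
      assume "z \<in> S2"
      then obtain w where "w \<in> ball xb \<rho>" "z = w + s *\<^sub>R v"
        unfolding S2_def using segment by auto
      then show ?thesis
        using shift[of w s] small[of w] s by force
    qed
    then show ?thesis
      using frontier_zero by force
  qed
  then have "(S1 \<union> S2) \<inter> frontier A = {}"
    by blast
  moreover have "connected (S1 \<union> S2)"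
  proof (rule connected_Un)
    show "connected S1"
      unfolding S1_def by (intro connected_continuous_image connected_Icc continuous_intros)
    show "connected S2"
      unfolding S2_def by (intro connected_continuous_image connected_segment continuous_intros)
    have "y + s *\<^sub>R v \<in> S1" "y + s *\<^sub>R v \<in> S2"
      unfolding S1_def S2_def using s by (auto intro: rev_image_eqI)
    then show "S1 \<inter> S2 \<noteq> {}"
      by blast
  qed
  moreover have "y \<in> S1 \<union> S2" "xb + s *\<^sub>R v \<in> S1 \<union> S2"
    unfolding S1_def S2_def using s by (auto intro: rev_image_eqI)
  ultimately show ?thesis
    by (metis connected_disjoint_frontier_interior_iff)
qed

lemma interior_constant_on_positive_side:
  obtains \<rho> where "0 < \<rho>" "\<rho> \<le> r/2"
    and "\<And>y y'. y \<in> ball xb \<rho> \<Longrightarrow> y' \<in> ball xb \<rho> \<Longrightarrow> 0 < f y \<Longrightarrow> 0 < f y' \<Longrightarrow>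
           y \<in> interior A \<longleftrightarrow> y' \<in> interior A"
proof -
  define s where "s = r / (2 * norm v)"
  have s: "0 < s" "norm (s *\<^sub>R v) = r/2"
    using v_nonzero r_pos by (auto simp: s_def)
  have "continuous (at xb) f"
    using deriv[OF xb_in_ball] by (rule has_derivative_continuous)
  moreover have "0 < 7/8 * s"
    using s by simp
  ultimately obtain \<rho>0 where "0 < \<rho>0" and \<rho>0: "\<And>z. dist z xb < \<rho>0 \<Longrightarrow> dist (f z) (f xb) < 7/8 * s"
    unfolding continuous_at_eps_delta by blast
  define \<rho> where "\<rho> = min \<rho>0 (r/2)"
  have small: "\<bar>f z\<bar> < 7/8 * s" if "z \<in> ball xb \<rho>" for z
    using \<rho>0[of z] that f_xb by (simp add: \<rho>_def dist_commute dist_real_def)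
  show thesis
  proof (rule that)
    show "0 < \<rho>" "\<rho> \<le> r/2"
      using \<open>0 < \<rho>0\<close> r_pos by (auto simp: \<rho>_def)
    then show "y \<in> interior A \<longleftrightarrow> y' \<in> interior A"
      if "y \<in> ball xb \<rho>" "y' \<in> ball xb \<rho>" "0 < f y" "0 < f y'" for y y'
      using positive_side_interior_iff[OF less_imp_le[OF s(1)] _ _ small] s(2) that by simp
  qed
qed

lemma interior_point_off_zero_set:
  assumes "interior A \<noteq> {}" "0 < \<rho>" "\<rho> \<le> r"
  obtains a where "a \<in> interior A" "a \<in> ball xb \<rho>" "f a \<noteq> 0"
proof -
  have "xb \<in> closure (interior A)"
    using convex_closure_interior[OF convex assms(1)] xb_frontier by (simp add: frontier_def)
  then obtain a0 where "a0 \<in> interior A" "dist a0 xb < \<rho>"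
    using assms(2) unfolding closure_approachable by blast
  then have "a0 \<in> interior A \<inter> ball xb \<rho>"
    by (simp add: dist_commute)
  then obtain e where "0 < e" and e: "ball a0 e \<subseteq> interior A \<inter> ball xb \<rho>"
    using open_contains_ball[of "interior A \<inter> ball xb \<rho>"] by blast
  show thesis
  proof (cases "f a0 = 0")
    case False
    then show thesis
      using that \<open>a0 \<in> interior A \<inter> ball xb \<rho>\<close> by blast
  next
    case True
    define t where "t = e / (2 * norm v)"
    have "0 < t" "norm (t *\<^sub>R v) < e"
      using v_nonzero \<open>0 < e\<close> by (auto simp: t_def)
    then have "a0 + t *\<^sub>R v \<in> ball a0 e"
      by (simp add: dist_norm)
    then have "a0 + t *\<^sub>R v \<in> interior A \<inter> ball xb \<rho>"
      using e by blast
    then have "f a0 + 7/8 * t \<le> f (a0 + t *\<^sub>R v)"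
      using \<open>a0 \<in> interior A \<inter> ball xb \<rho>\<close> \<open>0 < t\<close> assms(3)
      by (intro directional_derivative_lower_bound[OF convex_ball deriv slope_v]) auto
    then show thesis
      using that \<open>a0 + t *\<^sub>R v \<in> interior A \<inter> ball xb \<rho>\<close> True \<open>0 < t\<close> by force
  qed
qed

lemma sign_dichotomy:
  assumes "interior A \<noteq> {}"
  obtains \<rho> where "0 < \<rho>" "\<rho> \<le> r"
    and "(\<forall>y\<in>ball xb \<rho>. 0 < f y \<longrightarrow> y \<in> interior A) \<or> (\<forall>y\<in>ball xb \<rho>. 0 < - f y \<longrightarrow> y \<in> interior A)"
proof -
  obtain \<rho>1 where "0 < \<rho>1" "\<rho>1 \<le> r/2" and pos:
    "\<And>y y'. y \<in> ball xb \<rho>1 \<Longrightarrow> y' \<in> ball xb \<rho>1 \<Longrightarrow> 0 < f y \<Longrightarrow> 0 < f y' \<Longrightarrow>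
           y \<in> interior A \<longleftrightarrow> y' \<in> interior A"
    using interior_constant_on_positive_side by blast
  obtain \<rho>2 where "0 < \<rho>2" "\<rho>2 \<le> r/2" and neg:
    "\<And>y y'. y \<in> ball xb \<rho>2 \<Longrightarrow> y' \<in> ball xb \<rho>2 \<Longrightarrow> 0 < - f y \<Longrightarrow> 0 < - f y' \<Longrightarrow>
           y \<in> interior A \<longleftrightarrow> y' \<in> interior A"
    using boundary_defining_function.interior_constant_on_positive_side[OF uminus] by blast
  define \<rho> where "\<rho> = min \<rho>1 \<rho>2"
  have "0 < \<rho>" "\<rho> \<le> r"
    using \<open>0 < \<rho>1\<close> \<open>0 < \<rho>2\<close> \<open>\<rho>1 \<le> r/2\<close> r_pos by (auto simp: \<rho>_def)
  then obtain a where "a \<in> interior A" "a \<in> ball xb \<rho>" "f a \<noteq> 0"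
    using interior_point_off_zero_set[OF assms] by blast
  then consider "0 < f a" | "0 < - f a"
    by linarith
  then show thesis
  proof cases
    case 1
    then show thesis
      using that[OF \<open>0 < \<rho>\<close> \<open>\<rho> \<le> r\<close>] pos[of _ a] \<open>a \<in> interior A\<close> \<open>a \<in> ball xb \<rho>\<close>
      by (auto simp: \<rho>_def)
  next
    case 2
    then show thesis
      using that[OF \<open>0 < \<rho>\<close> \<open>\<rho> \<le> r\<close>] neg[of _ a] \<open>a \<in> interior A\<close> \<open>a \<in> ball xb \<rho>\<close>
      by (auto simp: \<rho>_def)
  qed
qed

lemma deriv_aligned_with_normal:
  assumes pos: "\<And>y. y \<in> ball xb \<rho> \<Longrightarrow> 0 < f y \<Longrightarrow> y \<in> interior A" and "\<rho> \<le> r"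
    and p: "p \<in> ball xb \<rho>" "f p = 0"
    and n: "norm n = 1" "\<And>y. y \<in> A \<Longrightarrow> 0 \<le> inner (y - p) n"
  shows "0 \<le> f' p n" and "f' p w = f' p n * inner w n"
proof -
  have p_ball: "p \<in> ball xb r"
    using p(1) \<open>\<rho> \<le> r\<close> by auto
  \<comment> \<open>Directions of increase of f at p point into {f > 0}, hence into A.\<close>
  have "0 \<le> inner w n" if "0 < f' p w" for w
  proof -
    have "((\<lambda>h. f (p + h *\<^sub>R w)) has_real_derivative f' p w) (at 0)"
      using has_real_derivative_along_line[of f "f' p" p 0 w] deriv[OF p_ball] by simp
    from DERIV_pos_inc_right[OF this that]
    have "eventually (\<lambda>h. 0 < f (p + h *\<^sub>R w)) (at_right 0)"
      using p(2) unfolding eventually_at_right_field by auto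
    moreover have "((\<lambda>h. p + h *\<^sub>R w) \<longlongrightarrow> p) (at_right 0)"
      by (auto intro!: tendsto_eq_intros)
    then have "eventually (\<lambda>h. p + h *\<^sub>R w \<in> ball xb \<rho>) (at_right (0::real))"
      using p(1) by (rule topological_tendstoD[OF _ open_ball])
    ultimately have "eventually (\<lambda>h. 0 < h \<and> p + h *\<^sub>R w \<in> interior A) (at_right 0)"
      using eventually_at_right_less[of 0] by eventually_elim (use pos in auto)
    then obtain h where "0 < h" "p + h *\<^sub>R w \<in> A"
      using eventually_happens'[OF trivial_limit_at_right_real] interior_subset by blast
    then show ?thesis
      using n(2)[of "p + h *\<^sub>R w"] by (simp add: zero_le_mult_iff)
  qed
  then show "0 \<le> f' p n" "f' p w = f' p n * inner w n"
    using linear_functional_nonneg_on_halfspace[OF linear_deriv[OF p_ball] n(1)] by blast+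
qed

lemma slope_along_normal:
  assumes "p \<in> ball xb r" "norm n = 1" "0 \<le> f' p n" "\<And>w. f' p w = f' p n * inner w n"
  obtains c where "0 < c" "\<And>z. z \<in> ball xb r \<Longrightarrow> c \<le> f' z n"
proof
  have "7/8 \<le> f' p n * inner v n"
    using slope_v[OF assms(1)] assms(4)[of v] by linarith
  also have "\<dots> \<le> f' p n * norm v"
    using norm_cauchy_schwarz[of v n] assms(2,3) by (simp add: mult_left_mono)
  finally have "0 < norm v * (f' p n - 2 * \<eta>)"
    using eta_v by (simp add: algebra_simps)
  then show "0 < f' p n - 2 * \<eta>"
    by (simp add: zero_less_mult_iff)
  show "f' p n - 2 * \<eta> \<le> f' z n" if "z \<in> ball xb r" for z
    using deriv_near[OF that, of n] deriv_near[OF assms(1), of n] assms(2) by (simp add: abs_le_iff)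
qed

lemma normal_ray_in_interior:
  assumes pos: "\<And>y. y \<in> ball xb \<rho> \<Longrightarrow> 0 < f y \<Longrightarrow> y \<in> interior A" and "\<rho> \<le> r"
    and p: "p \<in> ball xb \<rho>" "f p = 0"
    and n: "norm n = 1" "\<And>y. y \<in> A \<Longrightarrow> 0 \<le> inner (y - p) n"
    and t: "0 < t" "p + t *\<^sub>R n \<in> ball xb \<rho>"
  shows "p + t *\<^sub>R n \<in> interior A"
proof -
  have "0 \<le> f' p n" "\<And>w. f' p w = f' p n * inner w n"
    using deriv_aligned_with_normal[OF pos \<open>\<rho> \<le> r\<close> p n] by blast+
  moreover have "p \<in> ball xb r"
    using p(1) \<open>\<rho> \<le> r\<close> by auto
  ultimately obtain c where "0 < c" and slope: "\<And>z. z \<in> ball xb r \<Longrightarrow> c \<le> f' z n"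
    using slope_along_normal[OF _ n(1)] by blast
  have "f p + c * t \<le> f (p + t *\<^sub>R n)"
    using p(1) t \<open>\<rho> \<le> r\<close>
    by (intro directional_derivative_lower_bound[OF convex_ball deriv slope]) auto
  moreover have "0 < c * t"
    using \<open>0 < c\<close> t(1) by simp
  ultimately show ?thesis
    using pos[OF t(2)] p(2) by linarith
qed

lemma relaxed_projection_in_interior:
  assumes pos: "\<And>y. y \<in> ball xb \<rho> \<Longrightarrow> 0 < f y \<Longrightarrow> y \<in> interior A" and "\<rho> \<le> r"
    and x: "x \<notin> A" "dist x xb \<le> \<rho>/3" and \<alpha>: "1 < \<alpha>" "\<alpha> \<le> 2"
  shows "relaxed_proj \<alpha> A x \<in> interior A"
proof -
  have "xb \<in> A"
    using xb_frontier closed by (simp add: frontier_def)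
  then have "A \<noteq> {}"
    by blast
  define p where "p = closest_point A x"
  define d where "d = dist x p"
  define n where "n = (1/d) *\<^sub>R (p - x)"
  define t where "t = (\<alpha> - 1) * d"
  have "p \<in> A"
    unfolding p_def using closest_point_in_set[OF closed \<open>A \<noteq> {}\<close>] .
  then have "0 < d"
    using x(1) by (auto simp: d_def)
  then have "0 < t" "t \<le> d"
    using \<alpha> by (auto simp: t_def mult_le_cancel_right1)
  have n_norm: "norm n = 1"
    using \<open>0 < d\<close> by (simp add: n_def d_def dist_norm norm_minus_commute)
  have n_normal: "0 \<le> inner (y - p) n" if "y \<in> A" for y
    using closest_point_dot[OF convex closed that, of x] \<open>0 < d\<close>
    by (simp add: n_def p_def inner_commute inner_diff_right)
  have "d \<le> dist x xb"
    unfolding d_def p_def using closest_point_le[OF closed \<open>xb \<in> A\<close>] .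
  have "dist p xb \<le> dist x xb"
    using closest_point_lipschitz[OF convex closed \<open>A \<noteq> {}\<close>, of x xb] closest_point_self[OF \<open>xb \<in> A\<close>]
    by (simp add: p_def)
  then have "p \<in> ball xb \<rho>"
    using x(2) \<open>0 < d\<close> \<open>d \<le> dist x xb\<close> by (simp add: dist_commute)
  have "dist xb (p + t *\<^sub>R n) \<le> dist xb p + t"
    using dist_triangle[of xb "p + t *\<^sub>R n" p] n_norm \<open>0 < t\<close> by (simp add: dist_norm)
  then have "p + t *\<^sub>R n \<in> ball xb \<rho>"
    using \<open>dist p xb \<le> dist x xb\<close> \<open>t \<le> d\<close> \<open>d \<le> dist x xb\<close> x(2) \<open>p \<in> ball xb \<rho>\<close>
    by (simp add: dist_commute)
  moreover have "f p = 0"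
    using frontier_zero closest_point_in_frontier[OF closed \<open>A \<noteq> {}\<close> x(1)] \<open>p \<in> ball xb \<rho>\<close> \<open>\<rho> \<le> r\<close>
    by (auto simp: p_def)
  ultimately have "p + t *\<^sub>R n \<in> interior A"
    using normal_ray_in_interior[OF pos \<open>\<rho> \<le> r\<close> \<open>p \<in> ball xb \<rho>\<close> _ n_norm n_normal \<open>0 < t\<close>] by blast
  moreover have "relaxed_proj \<alpha> A x = p + t *\<^sub>R n"
    using \<open>0 < d\<close> by (simp add: relaxed_proj_def proj_def p_def t_def n_def algebra_simps)
  ultimately show ?thesis
    by simp
qed

end

lemma inner_blinfun_diff_le:
  fixes L M :: "'a::real_normed_vector \<Rightarrow>\<^sub>L 'b::real_inner"
  assumes "norm e = 1"
  shows "\<bar>inner (L w) e - inner (M w) e\<bar> \<le> norm (L - M) * norm w"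
proof -
  have "\<bar>inner (L w) e - inner (M w) e\<bar> = \<bar>inner ((L - M) w) e\<bar>"
    by (simp add: blinfun.diff_left inner_diff_left)
  also have "\<dots> \<le> norm ((L - M) w)"
    using Cauchy_Schwarz_ineq2[of "(L - M) w" e] assms by simp
  also have "\<dots> \<le> norm (L - M) * norm w"
    by (rule norm_blinfun)
  finally show ?thesis .
qed

lemma component_boundary_defining_function:
  fixes A :: "'a::euclidean_space set" and F :: "'a \<Rightarrow> 'b::euclidean_space"
  assumes "closed A" "convex A" "xb \<in> frontier A"
    and "open U" "xb \<in> U" and F': "\<And>y. y \<in> U \<Longrightarrow> (F has_derivative blinfun_apply (F' y)) (at y)"
    and "continuous (at xb) F'" and FU: "frontier A \<inter> U \<subseteq> {y. F y = 0}"
    and e: "norm e = 1" and v: "F' xb v = e"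
  obtains r \<eta> where "boundary_defining_function A (\<lambda>y. inner (F y) e) (\<lambda>z w. inner (F' z w) e) xb r \<eta> v"
proof -
  have "v \<noteq> 0"
    using v e by (auto simp: blinfun.zero_right)
  define \<eta> where "\<eta> = 1 / (8 * norm v)"
  have "0 < \<eta>"
    using \<open>v \<noteq> 0\<close> by (simp add: \<eta>_def)
  then obtain r0 where "0 < r0" and r0: "\<And>z. dist z xb < r0 \<Longrightarrow> dist (F' z) (F' xb) < \<eta>"
    using \<open>continuous (at xb) F'\<close> unfolding continuous_at_eps_delta by blast
  obtain r1 where "0 < r1" "ball xb r1 \<subseteq> U"
    using \<open>open U\<close> \<open>xb \<in> U\<close> open_contains_ball by blast
  define r where "r = min r0 r1"
  have "boundary_defining_function A (\<lambda>y. inner (F y) e) (\<lambda>z w. inner (F' z w) e) xb r \<eta> v"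
  proof
    show "0 < r"
      using \<open>0 < r0\<close> \<open>0 < r1\<close> by (simp add: r_def)
    show "((\<lambda>y. inner (F y) e) has_derivative (\<lambda>w. inner (F' z w) e)) (at z)" if "z \<in> ball xb r" for z
      using F' \<open>ball xb r1 \<subseteq> U\<close> that by (auto simp: r_def intro!: has_derivative_inner_left)
    show "\<bar>inner (F' z w) e - inner (F' xb w) e\<bar> \<le> \<eta> * norm w" if "z \<in> ball xb r" for z w
    proof -
      have "norm (F' z - F' xb) \<le> \<eta>"
        using r0[of z] that by (simp add: r_def dist_norm norm_minus_commute)
      then show ?thesis
        using inner_blinfun_diff_le[OF e, of "F' z" w "F' xb"] by (meson mult_right_mono norm_ge_zero order_trans)
    qed
    show "inner (F' xb v) e = 1"
      using v e by (simp add: dot_square_norm)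
    show "\<eta> * norm v \<le> 1/8"
      using \<open>v \<noteq> 0\<close> by (simp add: \<eta>_def)
    show "inner (F z) e = 0" if "z \<in> ball xb r" "z \<in> frontier A" for z
    proof -
      have "z \<in> U"
        using that(1) \<open>ball xb r1 \<subseteq> U\<close> by (auto simp: r_def)
      then have "F z = 0"
        using FU that(2) by blast
      then show ?thesis
        by simp
    qed
  qed (use assms in auto)
  then show thesis ..
qed

lemma C2_smooth_boundary_defining_function:
  fixes A :: "'a::euclidean_space set"
  assumes "closed A" "convex A" "xb \<in> frontier A"
    and "C2_smooth_boundary_at A xb TYPE('b::euclidean_space)"
  obtains f f' r \<eta> v where "boundary_defining_function A f f' xb r \<eta> v"
proof -
  obtain U and F :: "'a \<Rightarrow> 'b" where "open U" "xb \<in> U" "C2_on U F"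
    and surj: "\<forall>y\<in>U. F differentiable (at y) \<and> surj (frechet_derivative F (at y))"
    and FU: "frontier A \<inter> U = {y\<in>U. F y = 0}"
    using assms(4) unfolding C2_smooth_boundary_at_def by blast
  obtain F' :: "'a \<Rightarrow> ('a \<Rightarrow>\<^sub>L 'b)" and F'' :: "'a \<Rightarrow> ('a \<Rightarrow>\<^sub>L ('a \<Rightarrow>\<^sub>L 'b))"
    where F': "\<And>y. y \<in> U \<Longrightarrow> (F has_derivative blinfun_apply (F' y)) (at y)"
      and F'': "\<And>y. y \<in> U \<Longrightarrow> (F' has_derivative blinfun_apply (F'' y)) (at y)"
    using \<open>C2_on U F\<close> unfolding C2_on_def by blast
  have "continuous (at xb) F'"
    using F''[OF \<open>xb \<in> U\<close>] by (rule has_derivative_continuous)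
  obtain e :: 'b where "e \<in> Basis"
    using nonempty_Basis by blast
  have "surj (blinfun_apply (F' xb))"
    using surj frechet_derivative_at[OF F'[OF \<open>xb \<in> U\<close>]] \<open>xb \<in> U\<close> by simp
  then obtain v where "F' xb v = e"
    by (metis surjD)
  moreover have "norm e = 1"
    using \<open>e \<in> Basis\<close> by simp
  moreover have "frontier A \<inter> U \<subseteq> {y. F y = 0}"
    using FU by blast
  ultimately obtain r \<eta> where "boundary_defining_function A (\<lambda>y. inner (F y) e) (\<lambda>z w. inner (F' z w) e) xb r \<eta> v"
    using component_boundary_defining_function[OF assms(1-3) \<open>open U\<close> \<open>xb \<in> U\<close>, of F F']
      F' \<open>continuous (at xb) F'\<close> by blast
  then show thesis ..
qed

theorem lemma7:
  fixes A :: "'a::euclidean_space set" and xbar :: 'a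
  assumes "closed A" and "convex A" and "interior A \<noteq> {}"
    and "C2_smooth_boundary_at A xbar TYPE('b::euclidean_space)"
    and "xbar \<in> frontier A"
  shows "\<exists>\<delta>>0. \<forall>x. norm (x - xbar) \<le> \<delta> \<and> x \<notin> A \<longrightarrow>
           (\<forall>\<alpha>. 1 < \<alpha> \<and> \<alpha> \<le> 2 \<longrightarrow> relaxed_proj \<alpha> A x \<in> interior A)"
proof -
  obtain f f' r \<eta> v where bdf: "boundary_defining_function A f f' xbar r \<eta> v"
    using C2_smooth_boundary_defining_function[OF assms(1,2,5,4)] .
  then obtain \<rho> where "0 < \<rho>" "\<rho> \<le> r" and sides:
    "(\<forall>y\<in>ball xbar \<rho>. 0 < f y \<longrightarrow> y \<in> interior A) \<or> (\<forall>y\<in>ball xbar \<rho>. 0 < - f y \<longrightarrow> y \<in> interior A)"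
    using boundary_defining_function.sign_dichotomy[OF _ assms(3)] by blast
  have "relaxed_proj \<alpha> A x \<in> interior A"
    if "x \<notin> A" "dist x xbar \<le> \<rho>/3" "1 < \<alpha>" "\<alpha> \<le> 2" for x \<alpha>
    using sides
  proof
    assume "\<forall>y\<in>ball xbar \<rho>. 0 < f y \<longrightarrow> y \<in> interior A"
    then show ?thesis
      using boundary_defining_function.relaxed_projection_in_interior[OF bdf _ \<open>\<rho> \<le> r\<close> that] by blast
  next
    assume "\<forall>y\<in>ball xbar \<rho>. 0 < - f y \<longrightarrow> y \<in> interior A"
    then show ?thesis
      using boundary_defining_function.relaxed_projection_in_interior[OF
          boundary_defining_function.uminus[OF bdf] _ \<open>\<rho> \<le> r\<close> that] by blast
  qed
  then show ?thesis
    using \<open>0 < \<rho>\<close> by (intro exI[of _ "\<rho>/3"]) (auto simp: dist_norm)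
qed

end
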